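(* Let $p$ be any prime, $G=SL(2,\mathbb{Z}_p)$ and $T=\{F\in SL(2,\mathbb{Z}_p):\mathrm{Tr}(F)\neq 2\pmod p\}$. Then the clique number of the Cayley graph $\Gamma(G,T)$ satisfies $\omega(\Gamma(G,T))\geq p(p-1)$.
   Context: The Cayley graph $\Gamma(G,T)$ has vertex set $G$ and an edge between $g_1,g_2$ iff $g_1^{-1}g_2\in T$; thus $F_1,F_2$ are adjacent iff $\mathrm{Tr}(F_1^{-1}F_2)\neq 2 \pmod p$. The clique number $\omega$ is the largest size of a set of pairwise adjacent vertices. *)

theory Defs
  imports "HOL-Computational_Algebra.Primes"
begin

text \<open>2x2 matrices over Z_p, represented as tuples (a,b,c,d) of integers
  with entries in {0..p-1}, standing for the matrix [[a,b],[c,d]].\<close>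

type_synonym mat2 = "int \<times> int \<times> int \<times> int"

definition SL2 :: "int \<Rightarrow> mat2 set" where
  "SL2 p = {(a,b,c,d). a \<in> {0..p-1} \<and> b \<in> {0..p-1} \<and> c \<in> {0..p-1} \<and> d \<in> {0..p-1}
                        \<and> (a*d - b*c) mod p = 1 mod p}"

definition mmul :: "int \<Rightarrow> mat2 \<Rightarrow> mat2 \<Rightarrow> mat2" where
  "mmul p X Y = (case X of (a,b,c,d) \<Rightarrow> case Y of (e,f,g,h) \<Rightarrow>
     ((a*e + b*g) mod p, (a*f + b*h) mod p, (c*e + d*g) mod p, (c*f + d*h) mod p))"

text \<open>Inverse of a determinant-1 matrix: adjugate.\<close>
definition minv :: "int \<Rightarrow> mat2 \<Rightarrow> mat2" where
  "minv p X = (case X of (a,b,c,d) \<Rightarrow> (d mod p, (- b) mod p, (- c) mod p, a mod p))"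

definition mtr :: "mat2 \<Rightarrow> int" where
  "mtr X = (case X of (a,b,c,d) \<Rightarrow> a + d)"

definition Tset :: "int \<Rightarrow> mat2 set" where
  "Tset p = {F \<in> SL2 p. mtr F mod p \<noteq> 2 mod p}"

definition cay_adj :: "int \<Rightarrow> mat2 \<Rightarrow> mat2 \<Rightarrow> bool" where
  "cay_adj p g1 g2 \<longleftrightarrow> mmul p (minv p g1) g2 \<in> Tset p"

definition is_clique :: "int \<Rightarrow> mat2 set \<Rightarrow> bool" where
  "is_clique p S \<longleftrightarrow> S \<subseteq> SL2 p \<and> (\<forall>x\<in>S. \<forall>y\<in>S. x \<noteq> y \<longrightarrow> cay_adj p x y)"

definition clique_number :: "int \<Rightarrow> nat" where
  "clique_number p = Max (card ` {S. is_clique p S})"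

end

theory Submission
  imports Defs "HOL-Number_Theory.Number_Theory"
begin

(* For X, Y of determinant 1 one has tr(X^-1 Y) = 2 - det(X - Y), so X and Y are adjacent exactly
   when X - Y is invertible mod p. For odd p fix a quadratic nonresidue n and take the matrices
   [[a,b],[-nb,d]] of determinant 1 with a <> 0; they are parametrised by (a,b) in (Z/p)^* x Z/p,
   so there are p(p-1) of them. For two of them a e det(X - Y) = n (af - be)^2 - (a - e)^2 mod p,
   a norm form of Z/p[sqrt n], which vanishes only when a = e and b = f, i.e. X = Y.
   For p = 2 a clique of size 2 is written down directly. *)

lemma cong_in_range_imp_eq:
  fixes p x y :: int
  assumes "x \<in> {0..p-1}" "y \<in> {0..p-1}" "[x = y] (mod p)"
  shows "x = y"
  using assms by (intro cong_less_imp_eq_int) auto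

lemma exists_quadratic_nonresidue:
  fixes p :: int
  assumes "prime p" "p \<noteq> 2"
  shows "\<exists>n. \<not> QuadRes p n"
proof -
  have p: "p > 2" using prime_ge_2_int[OF assms(1)] assms(2) by linarith
  define sq where "sq = (\<lambda>x::int. x^2 mod p)"
  have "(p - 1)^2 = 1 + (p - 2) * p"
    by (simp add: power2_eq_square algebra_simps)
  then have "sq 1 = sq (p - 1)"
    unfolding sq_def by simp
  moreover have "1 \<in> {0..p-1}" "p - 1 \<in> {0..p-1}" "1 \<noteq> p - 1"
    using p by auto
  ultimately have "\<not> inj_on sq {0..p-1}"
    by (metis inj_onD)
  then have "\<not> {0..p-1} \<subseteq> sq ` {0..p-1}"
    using finite_surj_inj[of "{0..p-1}" sq] by blast
  then obtain n where n: "n \<in> {0..p-1}" "n \<notin> sq ` {0..p-1}"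
    by blast
  have "\<not> [x^2 = n] (mod p)" for x
  proof
    assume "[x^2 = n] (mod p)"
    then have "sq (x mod p) = n"
      using n(1) by (auto simp: sq_def cong_def power_mod)
    then show False
      using n(2) p by (auto simp: image_iff)
  qed
  then show ?thesis unfolding QuadRes_def by blast
qed

lemma coprime_if_in_range:
  fixes p a :: int
  assumes "prime p" "a \<in> {0..p-1}" "a \<noteq> 0"
  shows "coprime a p"
proof -
  have "\<not> p dvd a"
    using assms(2,3) by (auto dest: zdvd_imp_le)
  then show ?thesis
    using prime_imp_coprime[OF assms(1)] coprime_commute by blast
qed

lemma nonresidue_norm_cong_zero:
  fixes p n u v :: int
  assumes p: "prime p" and n: "\<not> QuadRes p n" and uv: "[u^2 = n * v^2] (mod p)"
  shows "p dvd u \<and> p dvd v"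
proof -
  have "p dvd v"
  proof (rule ccontr)
    assume "\<not> p dvd v"
    then have "coprime v p"
      using prime_imp_coprime[OF p] coprime_commute by blast
    then obtain w where w: "[v * w = 1] (mod p)"
      using cong_solve_coprime_int by blast
    have "[(u * w)^2 = n * v^2 * w^2] (mod p)"
      using uv unfolding power_mult_distrib by (rule cong_scalar_right)
    also have "n * v^2 * w^2 = n * (v * w)^2"
      by (simp add: power_mult_distrib)
    also have "[\<dots> = n * 1^2] (mod p)"
      using w by (intro cong_mult cong_pow cong_refl)
    finally show False
      using n by (auto simp: QuadRes_def)
  qed
  then have "p dvd n * v^2"
    by (simp add: power2_eq_square)
  then have "p dvd u^2"
    using cong_dvd_iff[OF uv] by simp
  then show ?thesis
    using \<open>p dvd v\<close> p prime_dvd_power by blast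
qed

fun det2 :: "mat2 \<Rightarrow> int" where
  "det2 (a,b,c,d) = a*d - b*c"

lemma mem_SL2:
  "(a,b,c,d) \<in> SL2 p \<longleftrightarrow>
     a \<in> {0..p-1} \<and> b \<in> {0..p-1} \<and> c \<in> {0..p-1} \<and> d \<in> {0..p-1} \<and>
     [det2 (a,b,c,d) = 1] (mod p)"
  by (simp add: SL2_def cong_def)

lemma mmul_minv_in_SL2:
  fixes p :: int
  assumes "p > 0" "(a,b,c,d) \<in> SL2 p" "(e,f,g,h) \<in> SL2 p"
  shows "mmul p (minv p (a,b,c,d)) (e,f,g,h) \<in> SL2 p"
proof -
  have "[det2 (mmul p (minv p (a,b,c,d)) (e,f,g,h))
         = (d*e + -b*g) * (-c*f + a*h) - (d*f + -b*h) * (-c*e + a*g)] (mod p)"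
    unfolding det2.simps mmul_def minv_def prod.case
    by (intro cong_diff cong_add cong_mult cong_refl cong_mod_leftI)
  also have "(d*e + -b*g) * (-c*f + a*h) - (d*f + -b*h) * (-c*e + a*g)
             = det2 (a,b,c,d) * det2 (e,f,g,h)"
    by (simp add: algebra_simps)
  also have "[\<dots> = 1 * 1] (mod p)"
    using assms by (intro cong_mult) (simp_all add: mem_SL2)
  finally show ?thesis
    using \<open>p > 0\<close> by (simp add: mem_SL2 mmul_def minv_def)
qed

lemma trace_minv_mmul_cong:
  fixes p :: int
  assumes "[det2 (a,b,c,d) = 1] (mod p)" "[det2 (e,f,g,h) = 1] (mod p)"
  shows "[mtr (mmul p (minv p (a,b,c,d)) (e,f,g,h)) = 2 - det2 (a-e, b-f, c-g, d-h)] (mod p)"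
proof -
  have "[mtr (mmul p (minv p (a,b,c,d)) (e,f,g,h)) = (d*e + -b*g) + (-c*f + a*h)] (mod p)"
    unfolding mtr_def mmul_def minv_def prod.case
    by (intro cong_add cong_mult cong_refl cong_mod_leftI)
  also have "(d*e + -b*g) + (-c*f + a*h)
             = det2 (a,b,c,d) + det2 (e,f,g,h) - det2 (a-e, b-f, c-g, d-h)"
    by (simp add: algebra_simps)
  also have "[\<dots> = 1 + 1 - det2 (a-e, b-f, c-g, d-h)] (mod p)"
    using assms by (intro cong_diff cong_add cong_refl)
  finally show ?thesis by simp
qed

lemma cay_adj_iff_det_diff:
  fixes p :: int
  assumes "p > 0" "(a,b,c,d) \<in> SL2 p" "(e,f,g,h) \<in> SL2 p"
  shows "cay_adj p (a,b,c,d) (e,f,g,h) \<longleftrightarrow> \<not> p dvd det2 (a-e, b-f, c-g, d-h)"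
proof -
  have "[mtr (mmul p (minv p (a,b,c,d)) (e,f,g,h)) = 2 - det2 (a-e, b-f, c-g, d-h)] (mod p)"
    using assms by (intro trace_minv_mmul_cong) (simp_all add: mem_SL2)
  then have "mtr (mmul p (minv p (a,b,c,d)) (e,f,g,h)) mod p = 2 mod p \<longleftrightarrow>
             [2 - det2 (a-e, b-f, c-g, d-h) = 2] (mod p)"
    unfolding cong_def by simp
  also have "\<dots> \<longleftrightarrow> p dvd det2 (a-e, b-f, c-g, d-h)"
    by (simp add: cong_iff_dvd_diff del: det2.simps)
  finally show ?thesis
    using mmul_minv_in_SL2[OF assms] by (simp add: cay_adj_def Tset_def)
qed

definition nonresidue_clique :: "int \<Rightarrow> int \<Rightarrow> mat2 set" where
  "nonresidue_clique p n =
     {(a,b,c,d). (a,b,c,d) \<in> SL2 p \<and> a \<noteq> 0 \<and> c = (- n * b) mod p}"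

lemma mem_nonresidue_clique:
  "(a,b,c,d) \<in> nonresidue_clique p n \<longleftrightarrow>
     (a,b,c,d) \<in> SL2 p \<and> a \<noteq> 0 \<and> c = (- n * b) mod p"
  by (simp add: nonresidue_clique_def)

lemma nonresidue_clique_memD:
  assumes "(a,b,c,d) \<in> nonresidue_clique p n"
  shows "a \<in> {0..p-1}" "b \<in> {0..p-1}" "c \<in> {0..p-1}" "d \<in> {0..p-1}" "a \<noteq> 0"
    and "p dvd (a*d - b*c - 1)" "p dvd (c + n*b)"
proof -
  have SL: "(a,b,c,d) \<in> SL2 p" and "a \<noteq> 0" and c: "c = (- n * b) mod p"
    using assms unfolding mem_nonresidue_clique by blast+
  from c have "[c = - n * b] (mod p)"
    by simp
  then show "p dvd (c + n*b)"
    by (simp add: cong_iff_dvd_diff)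
  show "p dvd (a*d - b*c - 1)"
    using SL by (simp add: mem_SL2 cong_iff_dvd_diff)
  show "a \<in> {0..p-1}" "b \<in> {0..p-1}" "c \<in> {0..p-1}" "d \<in> {0..p-1}" "a \<noteq> 0"
    using SL \<open>a \<noteq> 0\<close> unfolding mem_SL2 by simp_all
qed

lemma nonresidue_clique_eqI:
  fixes p :: int
  assumes p: "prime p"
    and X: "(a,b,c,d) \<in> nonresidue_clique p n" and Y: "(a,b,g,h) \<in> nonresidue_clique p n"
  shows "c = g \<and> d = h"
proof -
  have "c = g"
    using X Y by (simp add: nonresidue_clique_def)
  have "p dvd (a*d - b*c - 1) - (a*h - b*g - 1)"
    using X Y by (intro dvd_diff nonresidue_clique_memD(6))
  also have "(a*d - b*c - 1) - (a*h - b*g - 1) = a*d - a*h"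
    using \<open>c = g\<close> by simp
  finally have "[a * d = a * h] (mod p)"
    by (simp add: cong_iff_dvd_diff)
  moreover have "coprime a p"
    using coprime_if_in_range[OF p nonresidue_clique_memD(1,5)[OF X]] .
  ultimately have "[d = h] (mod p)"
    by (simp add: cong_mult_lcancel)
  then have "d = h"
    using cong_in_range_imp_eq nonresidue_clique_memD(4) X Y by blast
  with \<open>c = g\<close> show ?thesis ..
qed

lemma nonresidue_clique_det_diff_cong:
  assumes X: "(a,b,c,d) \<in> nonresidue_clique p n" and Y: "(e,f,g,h) \<in> nonresidue_clique p n"
  shows "[a * e * det2 (a-e, b-f, c-g, d-h) = n * (a*f - b*e)^2 - (a-e)^2] (mod p)"
proof -
  have "p dvd (a-e)*e*(a*d - b*c - 1) - (a-e)*a*(e*h - f*g - 1)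
              + ((a-e)*e*b - a*e*(b-f))*(c + n*b) + (a*e*(b-f) - (a-e)*a*f)*(g + n*f)"
    using nonresidue_clique_memD(6,7)[OF X] nonresidue_clique_memD(6,7)[OF Y]
    by (intro dvd_add[OF dvd_add[OF dvd_diff[OF dvd_mult dvd_mult] dvd_mult] dvd_mult])
  also have "\<dots> = a * e * det2 (a-e, b-f, c-g, d-h) - (n * (a*f - b*e)^2 - (a-e)^2)"
    by (simp add: algebra_simps power2_eq_square)
  finally show ?thesis
    by (simp add: cong_iff_dvd_diff del: det2.simps)
qed

lemma nonresidue_clique_det_diff:
  fixes p :: int
  assumes p: "prime p" and n: "\<not> QuadRes p n"
    and X: "(a,b,c,d) \<in> nonresidue_clique p n" and Y: "(e,f,g,h) \<in> nonresidue_clique p n"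
    and XY: "(a,b,c,d) \<noteq> (e,f,g,h)"
  shows "\<not> p dvd det2 (a-e, b-f, c-g, d-h)"
proof
  assume "p dvd det2 (a-e, b-f, c-g, d-h)"
  then have "[0 = a * e * det2 (a-e, b-f, c-g, d-h)] (mod p)"
    unfolding cong_sym_eq[of 0] cong_0_iff by (rule dvd_mult)
  also note nonresidue_clique_det_diff_cong[OF X Y]
  finally have "[(a-e)^2 = n * (a*f - b*e)^2] (mod p)"
    by (simp add: cong_iff_dvd_diff dvd_diff_commute)
  then have "p dvd a - e" and "p dvd a*f - b*e"
    using nonresidue_norm_cong_zero[OF p n] by blast+
  have "a = e"
    using \<open>p dvd a - e\<close> cong_in_range_imp_eq nonresidue_clique_memD(1) X Y
    by (metis cong_iff_dvd_diff)
  then have "[a * f = a * b] (mod p)"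
    using \<open>p dvd a*f - b*e\<close> by (simp add: cong_iff_dvd_diff mult.commute)
  moreover have "coprime a p"
    using coprime_if_in_range[OF p nonresidue_clique_memD(1,5)[OF X]] .
  ultimately have "[f = b] (mod p)"
    by (simp add: cong_mult_lcancel)
  then have "f = b"
    using cong_in_range_imp_eq nonresidue_clique_memD(2) X Y by blast
  then show False
    using nonresidue_clique_eqI[OF p X] Y XY \<open>a = e\<close> by blast
qed

lemma nonresidue_clique_exists:
  fixes p :: int
  assumes p: "prime p" and a: "a \<in> {1..p-1}" and b: "b \<in> {0..p-1}"
  shows "\<exists>c d. (a,b,c,d) \<in> nonresidue_clique p n"
proof -
  have p0: "p > 0"
    using prime_gt_0_int[OF p] .
  have "coprime a p"
    using a by (intro coprime_if_in_range[OF p]) auto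
  then obtain a' where a': "[a * a' = 1] (mod p)"
    using cong_solve_coprime_int by blast
  define c where "c = (- n * b) mod p"
  define d where "d = ((1 + b * c) * a') mod p"
  have "[a * d = a * a' * (1 + b * c)] (mod p)"
    unfolding d_def by (simp add: cong_scalar_left ac_simps)
  also have "[a * a' * (1 + b * c) = 1 * (1 + b * c)] (mod p)"
    using a' by (rule cong_scalar_right)
  finally have "[a * d - b * c = 1] (mod p)"
    by (simp add: cong_iff_dvd_diff diff_diff_eq add.commute)
  then have "(a,b,c,d) \<in> nonresidue_clique p n"
    using a b p0 by (simp add: mem_nonresidue_clique mem_SL2 c_def d_def)
  then show ?thesis by blast
qed

lemma card_nonresidue_clique:
  fixes p :: int
  assumes p: "prime p"
  shows "card (nonresidue_clique p n) = nat (p * (p - 1))"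
proof -
  have p0: "p > 0"
    using prime_gt_0_int[OF p] .
  let ?top_row = "\<lambda>(a::int, b::int, c::int, d::int). (a, b)"
  have "bij_betw ?top_row (nonresidue_clique p n) ({1..p-1} \<times> {0..p-1})"
  proof (rule bij_betw_imageI)
    show "inj_on ?top_row (nonresidue_clique p n)"
      using nonresidue_clique_eqI[OF p] by (auto simp: inj_on_def)
    show "?top_row ` nonresidue_clique p n = {1..p-1} \<times> {0..p-1}"
    proof
      show "?top_row ` nonresidue_clique p n \<subseteq> {1..p-1} \<times> {0..p-1}"
        by (auto simp: nonresidue_clique_def mem_SL2)
      show "{1..p-1} \<times> {0..p-1} \<subseteq> ?top_row ` nonresidue_clique p n"
        using nonresidue_clique_exists[OF p] by (force simp: image_iff)
    qed
  qed
  then have "card (nonresidue_clique p n) = card ({1..p-1} \<times> {0..p-1})"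
    by (rule bij_betw_same_card)
  also have "\<dots> = nat (p * (p - 1))"
    using p0 by (simp add: card_cartesian_product nat_mult_distrib)
  finally show ?thesis .
qed

lemma is_clique_nonresidue_clique:
  fixes p :: int
  assumes p: "prime p" and n: "\<not> QuadRes p n"
  shows "is_clique p (nonresidue_clique p n)"
  unfolding is_clique_def
proof (intro conjI ballI impI)
  show "nonresidue_clique p n \<subseteq> SL2 p"
    by (auto simp: nonresidue_clique_def)
next
  fix X Y
  assume X: "X \<in> nonresidue_clique p n" and Y: "Y \<in> nonresidue_clique p n"
    and "X \<noteq> Y"
  obtain a b c d e f g h where XY: "X = (a,b,c,d)" "Y = (e,f,g,h)"
    by (metis prod.exhaust)
  have "(a,b,c,d) \<in> SL2 p" "(e,f,g,h) \<in> SL2 p"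
    using X Y unfolding XY mem_nonresidue_clique by blast+
  moreover have "\<not> p dvd det2 (a-e, b-f, c-g, d-h)"
    using nonresidue_clique_det_diff[OF p n] X Y \<open>X \<noteq> Y\<close> unfolding XY by blast
  ultimately show "cay_adj p X Y"
    unfolding XY using cay_adj_iff_det_diff prime_gt_0_int[OF p] by blast
qed

lemma is_clique_SL2_two: "is_clique 2 {(1,0,0,1), (1,1,1,0)}"
proof -
  have "{(1,0,0,1), (1,1,1,0)} \<subseteq> SL2 2"
    by (simp add: SL2_def)
  then show ?thesis
    by (auto simp: is_clique_def cay_adj_iff_det_diff)
qed

lemma card_le_clique_number:
  fixes p :: int
  assumes "p > 0" "is_clique p S"
  shows "card S \<le> clique_number p"
proof -
  have "finite (SL2 p)"
    by (rule finite_subset[of _ "{0..p-1} \<times> {0..p-1} \<times> {0..p-1} \<times> {0..p-1}"])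
       (auto simp: SL2_def)
  moreover have "{S. is_clique p S} \<subseteq> Pow (SL2 p)"
    by (auto simp: is_clique_def)
  ultimately have "finite {S. is_clique p S}"
    by (meson finite_Pow_iff finite_subset)
  then show ?thesis
    unfolding clique_number_def using assms(2) by (intro Max_ge) auto
qed

theorem mainTheorem3:
  fixes p :: int
  assumes "prime p"
  shows "clique_number p \<ge> nat (p * (p - 1))"
proof (cases "p = 2")
  case True
  then show ?thesis
    using card_le_clique_number[OF _ is_clique_SL2_two] by simp
next
  case False
  then obtain n where "\<not> QuadRes p n"
    using exists_quadratic_nonresidue[OF assms] by blast
  then have "card (nonresidue_clique p n) \<le> clique_number p"
    using assms by (intro card_le_clique_number is_clique_nonresidue_clique prime_gt_0_int)
  then show ?thesis
    using card_nonresidue_clique[OF assms] by simp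
qed

end
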